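(* Let $n,m\ge 3$ and let $G=P_n\square P_m$ be the grid graph. Every $3$-minimal $M$ of $G$ has either (i) two vertices $(i,j)$ and $(k,j)$ with $i\neq k$ and a third vertex $(p,q)$ with $i\le p\le k$ and $q\neq j$; or (ii) two vertices $(i,j)$ and $(i,k)$ with $j\neq k$ and a third vertex $(p,q)$ with $j\le q\le k$ and $p\neq i$.
   Context: The grid graph $P_n\square P_m$ has vertex set $\{(i,j):0\le i\le n-1,\ 0\le j\le m-1\}$, with $(i,j)$ adjacent to $(k,l)$ iff $|i-k|+|j-l|=1$; distance $d((i,j),(k,l))=|i-k|+|j-l|$. A vertex $w$ resolves $u,v$ if $d(w,u)\ne d(w,v)$; a set $R$ is resolving if every pair of distinct vertices is resolved by some vertex of $R$; a $3$-minimal is a resolving set $R$ of cardinality $3$ such that no $R\setminus\{x\}$, $x\in R$, is resolving. *)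

theory Defs
  imports Main
begin

definition grid_vertices :: "nat \<Rightarrow> nat \<Rightarrow> (nat \<times> nat) set" where
  "grid_vertices n m = {0..<n} \<times> {0..<m}"

text \<open>Graph distance in the grid: the Manhattan distance.\<close>
definition grid_dist :: "nat \<times> nat \<Rightarrow> nat \<times> nat \<Rightarrow> nat" where
  "grid_dist u v = nat \<bar>int (fst u) - int (fst v)\<bar> + nat \<bar>int (snd u) - int (snd v)\<bar>"

definition resolves :: "nat \<times> nat \<Rightarrow> nat \<times> nat \<Rightarrow> nat \<times> nat \<Rightarrow> bool" where
  "resolves w u v \<longleftrightarrow> grid_dist w u \<noteq> grid_dist w v"

definition resolving_set :: "nat \<Rightarrow> nat \<Rightarrow> (nat \<times> nat) set \<Rightarrow> bool" where
  "resolving_set n m R \<longleftrightarrow> R \<subseteq> grid_vertices n m \<and>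
     (\<forall>u\<in>grid_vertices n m. \<forall>v\<in>grid_vertices n m. u \<noteq> v \<longrightarrow> (\<exists>w\<in>R. resolves w u v))"

definition three_minimal :: "nat \<Rightarrow> nat \<Rightarrow> (nat \<times> nat) set \<Rightarrow> bool" where
  "three_minimal n m R \<longleftrightarrow> resolving_set n m R \<and> card R = 3 \<and>
     (\<forall>x\<in>R. \<not> resolving_set n m (R - {x}))"

end

theory Submission
  imports Defs "HOL-Library.Product_Lexorder"
begin

text \<open>
  Around a cell with lower-left corner \<open>(x, y)\<close>, the vertices \<open>(x + 1, y)\<close> and \<open>(x, y + 1)\<close>
  are equidistant from every vertex weakly below-left or strictly above-right of the cell, and
  \<open>(x, y)\<close>, \<open>(x + 1, y + 1)\<close> are equidistant from every vertex in the two other quadrants.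
  So a resolving set cannot be split in either of these ways. For three vertices violating
  (i) and (ii), this excludes every configuration except three vertices on one boundary row or
  column, among them both of its endpoints; but these two endpoints alone resolve the grid,
  so the set is not 3-minimal.
\<close>

definition row_bracket :: "(nat \<times> nat) set \<Rightarrow> bool" where
  "row_bracket M \<longleftrightarrow> (\<exists>i j k p q. (i, j) \<in> M \<and> (k, j) \<in> M \<and> i < k \<and> (p, q) \<in> M \<and>
     i \<le> p \<and> p \<le> k \<and> q \<noteq> j)"

definition column_bracket :: "(nat \<times> nat) set \<Rightarrow> bool" where
  "column_bracket M \<longleftrightarrow> (\<exists>i j k p q. (i, j) \<in> M \<and> (i, k) \<in> M \<and> j < k \<and> (p, q) \<in> M \<and>
     j \<le> q \<and> q \<le> k \<and> p \<noteq> i)"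

lemma row_bracketI:
  "(i, j) \<in> M \<Longrightarrow> (k, j) \<in> M \<Longrightarrow> i < k \<Longrightarrow> (p, q) \<in> M \<Longrightarrow> i \<le> p \<Longrightarrow> p \<le> k \<Longrightarrow> q \<noteq> j
    \<Longrightarrow> row_bracket M"
  unfolding row_bracket_def by blast

lemma column_bracketI:
  "(i, j) \<in> M \<Longrightarrow> (i, k) \<in> M \<Longrightarrow> j < k \<Longrightarrow> (p, q) \<in> M \<Longrightarrow> j \<le> q \<Longrightarrow> q \<le> k \<Longrightarrow> p \<noteq> i
    \<Longrightarrow> column_bracket M"
  unfolding column_bracket_def by blast

lemma card_3_obtain_sorted:
  fixes M :: "'a::linorder set"
  assumes "card M = 3"
  obtains x y z where "M = {x, y, z}" "x < y" "y < z"
proof -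
  obtain x y z where M: "M = {x, y, z}" and "x \<noteq> y" "x \<noteq> z" "y \<noteq> z"
    using assms by (auto simp: card_3_iff)
  then consider "x < y" "y < z" | "x < z" "z < y" | "y < x" "x < z" | "y < z" "z < x"
    | "z < x" "x < y" | "z < y" "y < x" by (metis linorder_neqE)
  then show thesis using that unfolding M by cases (auto simp: insert_commute)
qed

lemma card_3_remove_to_pair:
  assumes "card M = 3" "p \<in> M" "q \<in> M" "p \<noteq> q"
  obtains x where "x \<in> M" "M - {x} = {p, q}"
proof -
  have "card (M - {p, q}) = 1"
    using assms by (simp add: card_Diff_subset card_gt_0_iff)
  then obtain x where "M - {p, q} = {x}" by (rule card_1_singletonE)
  then show thesis using that assms by blast
qed

lemma grid_dist_swap [simp]: "grid_dist (prod.swap u) (prod.swap v) = grid_dist u v"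
  by (simp add: grid_dist_def)

lemma resolving_set_swap_imp:
  assumes "resolving_set n m R"
  shows "resolving_set m n (prod.swap ` R)"
  unfolding resolving_set_def resolves_def
proof (intro conjI ballI impI)
  show "prod.swap ` R \<subseteq> grid_vertices m n"
    using assms by (auto simp: resolving_set_def grid_vertices_def)
next
  fix u v assume "u \<in> grid_vertices m n" "v \<in> grid_vertices m n" "u \<noteq> v"
  then have "prod.swap u \<in> grid_vertices n m" "prod.swap v \<in> grid_vertices n m"
    "prod.swap u \<noteq> prod.swap v"
    by (auto simp: grid_vertices_def)
  then obtain w where "w \<in> R" "grid_dist w (prod.swap u) \<noteq> grid_dist w (prod.swap v)"
    using assms unfolding resolving_set_def resolves_def by blast
  then have "grid_dist (prod.swap w) u \<noteq> grid_dist (prod.swap w) v"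
    by (metis grid_dist_swap swap_swap)
  then show "\<exists>w\<in>prod.swap ` R. grid_dist w u \<noteq> grid_dist w v"
    using \<open>w \<in> R\<close> by (intro bexI[of _ "prod.swap w"]) auto
qed

lemma resolving_set_swap: "resolving_set m n (prod.swap ` R) \<longleftrightarrow> resolving_set n m R"
proof -
  have "prod.swap ` prod.swap ` R = R"
    by (simp add: image_image)
  then show ?thesis
    by (metis resolving_set_swap_imp)
qed

lemma row_bracket_swap: "row_bracket (prod.swap ` M) \<longleftrightarrow> column_bracket M"
  unfolding row_bracket_def column_bracket_def by (simp only: pair_in_swap_image) blast

lemma column_bracket_swap: "column_bracket (prod.swap ` M) \<longleftrightarrow> row_bracket M"
  unfolding row_bracket_def column_bracket_def by (simp only: pair_in_swap_image) blast

lemma resolving_setD: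
  assumes "resolving_set n m R" "u \<in> grid_vertices n m" "v \<in> grid_vertices n m" "u \<noteq> v"
  shows "\<exists>w\<in>R. grid_dist w u \<noteq> grid_dist w v"
  using assms unfolding resolving_set_def resolves_def by blast

lemma grid_dist_diagonal_pair:
  assumes "(fst w \<le> x) = (snd w \<le> y)"
  shows "grid_dist w (x + 1, y) = grid_dist w (x, y + 1)"
  using assms by (cases w) (auto simp: grid_dist_def)

lemma grid_dist_antidiagonal_pair:
  assumes "(fst w \<le> x) \<noteq> (snd w \<le> y)"
  shows "grid_dist w (x, y) = grid_dist w (x + 1, y + 1)"
  using assms by (cases w) (auto simp: grid_dist_def)

lemma resolving_set_meets_antidiagonal_quadrants:
  assumes "resolving_set n m R" "x + 1 < n" "y + 1 < m"
  shows "\<exists>w\<in>R. (fst w \<le> x) \<noteq> (snd w \<le> y)"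
proof -
  obtain w where "w \<in> R" "grid_dist w (x + 1, y) \<noteq> grid_dist w (x, y + 1)"
    using resolving_setD[OF assms(1), of "(x + 1, y)" "(x, y + 1)"] assms(2,3)
    by (auto simp: grid_vertices_def)
  then show ?thesis
    using grid_dist_diagonal_pair by blast
qed

lemma resolving_set_meets_diagonal_quadrants:
  assumes "resolving_set n m R" "x + 1 < n" "y + 1 < m"
  shows "\<exists>w\<in>R. (fst w \<le> x) = (snd w \<le> y)"
proof -
  obtain w where "w \<in> R" "grid_dist w (x, y) \<noteq> grid_dist w (x + 1, y + 1)"
    using resolving_setD[OF assms(1), of "(x, y)" "(x + 1, y + 1)"] assms(2,3)
    by (auto simp: grid_vertices_def)
  then show ?thesis
    using grid_dist_antidiagonal_pair by blast
qed

lemma not_resolving_general_position: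
  assumes "a1 < a2" "a2 < a3" "b1 \<noteq> b2" "b1 \<noteq> b3" "b2 \<noteq> b3"
  shows "\<not> resolving_set n m {(a1, b1), (a2, b2), (a3, b3)}"
proof
  assume res: "resolving_set n m {(a1, b1), (a2, b2), (a3, b3)}"
  then have bounds: "a3 < n" "b1 < m" "b2 < m" "b3 < m"
    by (auto simp: resolving_set_def grid_vertices_def)
  note antidiagonal = resolving_set_meets_antidiagonal_quadrants[OF res]
  note diagonal = resolving_set_meets_diagonal_quadrants[OF res]
  consider "b1 < b2" "b1 < b3" | "b2 < b1" "b3 < b1" | "b2 < b1" "b1 < b3" | "b3 < b1" "b1 < b2"
    using assms by linarith
  then show False
  proof cases
    case 1
    then show False using antidiagonal[of a1 b1] assms bounds by auto
  next
    case 2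
    then show False using diagonal[of a1 b2] diagonal[of a1 b3] assms bounds by (cases "b2 < b3") auto
  next
    case 3
    then show False using antidiagonal[of a2 b1] assms bounds by auto
  next
    case 4
    then show False using diagonal[of a2 b3] assms bounds by auto
  qed
qed

lemma column_pair_with_third_point:
  assumes M: "M = {(a, b), (a, b'), (c, d)}" and "b < b'" "c \<noteq> a"
    and res: "resolving_set n m M"
  shows "row_bracket M \<or> column_bracket M"
proof -
  have bounds: "a < n" "c < n" "b' < m" "d < m"
    using res by (auto simp: M resolving_set_def grid_vertices_def)
  note antidiagonal = resolving_set_meets_antidiagonal_quadrants[OF res]
  note diagonal = resolving_set_meets_diagonal_quadrants[OF res]
  consider "d = b" | "d = b'" | "b < d" "d < b'" | "d < b" | "b' < d"
    by linarith
  then show ?thesis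
  proof cases
    case 1
    then have "row_bracket M"
      by (intro row_bracketI[of "min a c" b M "max a c" a b']) (use assms in \<open>auto simp: M\<close>)
    then show ?thesis ..
  next
    case 2
    then have "row_bracket M"
      by (intro row_bracketI[of "min a c" b' M "max a c" a b]) (use assms in \<open>auto simp: M\<close>)
    then show ?thesis ..
  next
    case 3
    then have "column_bracket M"
      by (intro column_bracketI[of a b M b' c d]) (use assms in \<open>auto simp: M\<close>)
    then show ?thesis ..
  next
    case 4
    then have False
      using diagonal[of a d] antidiagonal[of c d] assms bounds by (cases "a < c") (auto simp: M)
    then show ?thesis ..
  next
    case 5
    then have False
      using antidiagonal[of a b'] diagonal[of c b'] assms bounds by (cases "a < c") (auto simp: M)
    then show ?thesis ..
  qed
qed

text \<open>
  On a boundary column \<open>|x - a|\<close> is monotone in \<open>x\<close>; the sum and the difference of the distances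
  to the two endpoints then determine \<open>x\<close> and \<open>y\<close>.
\<close>

lemma boundary_column_endpoints_resolving:
  assumes "a = 0 \<or> a = n - 1" "a < n" "0 < m"
  shows "resolving_set n m {(a, 0), (a, m - 1)}"
  unfolding resolving_set_def resolves_def grid_vertices_def
proof (intro conjI ballI impI)
  show "{(a, 0), (a, m - 1)} \<subseteq> {0..<n} \<times> {0..<m}"
    using assms by auto
next
  fix u v assume u: "u \<in> {0..<n} \<times> {0..<m}" and v: "v \<in> {0..<n} \<times> {0..<m}" and "u \<noteq> v"
  show "\<exists>w\<in>{(a, 0), (a, m - 1)}. grid_dist w u \<noteq> grid_dist w v"
  proof (rule ccontr)
    assume "\<not> ?thesis"
    then have "grid_dist (a, 0) u = grid_dist (a, 0) v" "grid_dist (a, m - 1) u = grid_dist (a, m - 1) v"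
      by auto
    then show False
      using u v \<open>u \<noteq> v\<close> assms by (cases u, cases v) (auto simp: grid_dist_def)
  qed
qed

lemma resolving_set_in_column:
  assumes res: "resolving_set n m R" and column: "fst ` R = {a}" and "2 \<le> n" "2 \<le> m"
  shows "(a = 0 \<or> a = n - 1) \<and> (a, 0) \<in> R \<and> (a, m - 1) \<in> R"
proof -
  have in_column: "\<forall>w\<in>R. w = (a, snd w)"
    using column by (metis prod.collapse singletonD imageI)
  have "R \<subseteq> grid_vertices n m"
    using res by (simp add: resolving_set_def)
  moreover have "a \<in> fst ` R"
    using column by simp
  ultimately have bounds: "a < n" "\<forall>w\<in>R. snd w < m"
    by (auto simp: grid_vertices_def)
  note antidiagonal = resolving_set_meets_antidiagonal_quadrants[OF res]
  note diagonal = resolving_set_meets_diagonal_quadrants[OF res]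
  have cell_bounds: "0 + 1 < m" "m - 2 + 1 < m" "a + 1 < n \<or> 0 < a \<and> a - 1 + 1 < n"
    using bounds assms(3,4) by auto
  have "a = 0 \<or> a = n - 1"
  proof (rule ccontr)
    assume "\<not> (a = 0 \<or> a = n - 1)"
    then have "(a - 1, 0) \<in> grid_vertices n m" "(a + 1, 0) \<in> grid_vertices n m"
      "(a - 1, 0) \<noteq> (a + 1, 0)" "\<forall>w\<in>R. grid_dist w (a - 1, 0) = grid_dist w (a + 1, 0)"
      using bounds in_column \<open>2 \<le> m\<close> by (auto simp: grid_vertices_def grid_dist_def)
    then show False
      using resolving_setD[OF res, of "(a - 1, 0)" "(a + 1, 0)"] by blast
  qed
  moreover have "(a, 0) \<in> R"
  proof (rule ccontr)
    assume "(a, 0) \<notin> R"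
    then have "\<forall>w\<in>R. fst w = a \<and> 0 < snd w"
      using in_column by (metis fst_conv gr0I)
    then show False
      using diagonal[of a 0] antidiagonal[of "a - 1" 0] cell_bounds by fastforce
  qed
  moreover have "(a, m - 1) \<in> R"
  proof (rule ccontr)
    assume "(a, m - 1) \<notin> R"
    then have "\<forall>w\<in>R. fst w = a \<and> snd w \<noteq> m - 1"
      using in_column by (metis fst_conv)
    then have "\<forall>w\<in>R. fst w = a \<and> snd w \<le> m - 2"
      using bounds by fastforce
    then show False
      using antidiagonal[of a "m - 2"] diagonal[of "a - 1" "m - 2"] cell_bounds by auto
  qed
  ultimately show ?thesis by blast
qed

lemma row_pair_with_third_point:
  assumes M: "M = {(a, b), (a', b), (c, d)}" and "a < a'" "d \<noteq> b"
    and res: "resolving_set n m M"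
  shows "row_bracket M \<or> column_bracket M"
proof -
  have "prod.swap ` M = {(b, a), (b, a'), (d, c)}"
    by (simp add: M)
  moreover have "resolving_set m n (prod.swap ` M)"
    using res by (simp add: resolving_set_swap)
  ultimately have "row_bracket (prod.swap ` M) \<or> column_bracket (prod.swap ` M)"
    using column_pair_with_third_point assms(2,3) by blast
  then show ?thesis
    by (auto simp: row_bracket_swap column_bracket_swap)
qed

lemma boundary_row_endpoints_resolving:
  assumes "b = 0 \<or> b = m - 1" "b < m" "0 < n"
  shows "resolving_set n m {(0, b), (n - 1, b)}"
proof -
  have "resolving_set m n {(b, 0), (b, n - 1)}"
    using boundary_column_endpoints_resolving assms by blast
  moreover have "{(b, 0), (b, n - 1)} = prod.swap ` {(0, b), (n - 1, b)}"
    by simp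
  ultimately show ?thesis
    using resolving_set_swap by metis
qed

lemma resolving_set_in_row:
  assumes res: "resolving_set n m R" and row: "snd ` R = {b}" and "2 \<le> n" "2 \<le> m"
  shows "(b = 0 \<or> b = m - 1) \<and> (0, b) \<in> R \<and> (n - 1, b) \<in> R"
proof -
  have "fst ` prod.swap ` R = {b}"
    using row by (simp add: image_image)
  moreover have "resolving_set m n (prod.swap ` R)"
    using res by (simp add: resolving_set_swap)
  ultimately show ?thesis
    using resolving_set_in_column[of m n "prod.swap ` R" b] assms(3,4) by simp
qed

lemma resolving_triple_bracketed_or_reducible:
  assumes res: "resolving_set n m M" and card: "card M = 3" and "2 \<le> n" "2 \<le> m"
  shows "row_bracket M \<or> column_bracket M \<or> (\<exists>x\<in>M. resolving_set n m (M - {x}))"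
proof -
  obtain a1 b1 a2 b2 a3 b3 where M: "M = {(a1, b1), (a2, b2), (a3, b3)}"
    and lex: "(a1, b1) < (a2, b2)" "(a2, b2) < (a3, b3)"
    using card_3_obtain_sorted[OF card] by (metis prod.collapse)
  have bounds: "a1 < n" "a2 < n" "b1 < m" "b3 < m"
    using res by (auto simp: M resolving_set_def grid_vertices_def)
  have reducible: "\<exists>x\<in>M. resolving_set n m (M - {x})"
    if "p \<in> M" "q \<in> M" "p \<noteq> q" "resolving_set n m {p, q}" for p q
    using card_3_remove_to_pair[OF card that(1-3)] that(4) by metis
  consider (column) "a1 = a2" "a2 = a3" | (lower_pair) "a1 = a2" "a2 < a3"
    | (upper_pair) "a1 < a2" "a2 = a3" | (spread) "a1 < a2" "a2 < a3"
    using lex unfolding less_prod_def by (metis fst_conv le_neq_implies_less)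
  then show ?thesis
  proof cases
    case column
    then have "fst ` M = {a1}"
      by (auto simp: M)
    then have "(a1 = 0 \<or> a1 = n - 1) \<and> (a1, 0) \<in> M \<and> (a1, m - 1) \<in> M"
      using resolving_set_in_column res assms(3,4) by blast
    then show ?thesis
      using reducible[of "(a1, 0)" "(a1, m - 1)"] boundary_column_endpoints_resolving[of a1 n m]
        bounds assms(4) by auto
  next
    case lower_pair
    then show ?thesis
      using column_pair_with_third_point[of M a1 b1 b2 a3 b3] lex res by (auto simp: M less_prod_def)
  next
    case upper_pair
    moreover have "M = {(a2, b2), (a2, b3), (a1, b1)}"
      using upper_pair by (auto simp: M)
    ultimately show ?thesis
      using column_pair_with_third_point[of M a2 b2 b3 a1 b1] lex res by (auto simp: less_prod_def)
  next
    case spread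
    consider (row) "b1 = b2" "b2 = b3" | "b1 = b2" "b2 \<noteq> b3" | "b1 = b3" "b2 \<noteq> b3"
      | "b2 = b3" "b1 \<noteq> b2" | (general) "b1 \<noteq> b2" "b1 \<noteq> b3" "b2 \<noteq> b3"
      by blast
    then show ?thesis
    proof cases
      case row
      then have "snd ` M = {b1}"
        by (auto simp: M)
      then have "(b1 = 0 \<or> b1 = m - 1) \<and> (0, b1) \<in> M \<and> (n - 1, b1) \<in> M"
        using resolving_set_in_row res assms(3,4) by blast
      then show ?thesis
        using reducible[of "(0, b1)" "(n - 1, b1)"] boundary_row_endpoints_resolving[of b1 m n]
          bounds assms(3) by auto
    next
      case 2
      then show ?thesis
        using row_pair_with_third_point[of M a1 b1 a2 a3 b3] spread res by (auto simp: M)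
    next
      case 3
      moreover have "M = {(a1, b1), (a3, b1), (a2, b2)}"
        using 3 by (auto simp: M)
      ultimately show ?thesis
        using row_pair_with_third_point[of M a1 b1 a3 a2 b2] spread res by auto
    next
      case 4
      moreover have "M = {(a2, b2), (a3, b2), (a1, b1)}"
        using 4 by (auto simp: M)
      ultimately show ?thesis
        using row_pair_with_third_point[of M a2 b2 a3 a1 b1] spread res by auto
    next
      case general
      then show ?thesis
        using not_resolving_general_position[of a1 a2 a3 b1 b2 b3 n m] spread res by (simp add: M)
    qed
  qed
qed

theorem proposition3:
  fixes n m :: nat and M :: "(nat \<times> nat) set"
  assumes "n \<ge> 3" and "m \<ge> 3" and "three_minimal n m M"
  shows "(\<exists>i j k p q. (i, j) \<in> M \<and> (k, j) \<in> M \<and> i < k \<and> (p, q) \<in> M \<and>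
            i \<le> p \<and> p \<le> k \<and> q \<noteq> j)
       \<or> (\<exists>i j k p q. (i, j) \<in> M \<and> (i, k) \<in> M \<and> j < k \<and> (p, q) \<in> M \<and>
            j \<le> q \<and> q \<le> k \<and> p \<noteq> i)"
proof -
  have "resolving_set n m M" "card M = 3" "\<forall>x\<in>M. \<not> resolving_set n m (M - {x})"
    using assms(3) unfolding three_minimal_def by auto
  then have "row_bracket M \<or> column_bracket M"
    using resolving_triple_bracketed_or_reducible[of n m M] assms(1,2) by auto
  then show ?thesis
    unfolding row_bracket_def column_bracket_def .
qed

end
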